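(* Let $f\in\mathcal{H}^2_{\omega}$ with $\|f\|=1$. Then the following are equivalent: (a) $f$ is $\mathcal{H}^2_{\omega}$-inner; (b) there exist a closed $z$-invariant subspace $\mathcal{M}\neq\{0\}$ of $\mathcal{H}^2_{\omega}$ and an integer $d\geq 0$ such that $z^k\in\mathcal{M}^{\perp}$ for all $0\leq k\leq d-1$, $z^d\notin\mathcal{M}^{\perp}$, and $f$ is a constant multiple of $P_{\mathcal{M}}(z^d)$, the orthogonal projection of $z^d$ onto $\mathcal{M}$.
   Context: Let $\omega=\{\omega_n\}_{n\geq 0}$ be a sequence of positive reals with $\omega_0=1$ and $\lim_{n\to\infty}\omega_{n+1}/\omega_n=1$. $\mathcal{H}^2_{\omega}$ is the Hilbert space of power series $f(z)=\sum_{n\ge0}a_nz^n$ with $\|f\|^2=\sum_{n\geq0}\omega_n|a_n|^2<\infty$ and inner product $\langle f,g\rangle=\sum_n\omega_na_n\overline{b_n}$ for $g=\sum b_nz^n$; its elements are holomorphic on the unit disk $\mathbb{D}$. A closed subspace $\mathcal{M}$ is $z$-invariant if $z\mathcal{M}\subset\mathcal{M}$. A function $f\in\mathcal{H}^2_{\omega}$ is $\mathcal{H}^2_{\omega}$-inner if $\|f\|=1$ and $\langle z^mf,f\rangle=0$ for all integers $m\geq1$. *)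

theory Defs
  imports "HOL-Analysis.Analysis"
begin

text \<open>Elements of H^2_omega are represented by their Taylor coefficient sequences
  a :: nat => complex, with f(z) = sum a_n z^n.\<close>

definition admissible_weight :: "(nat \<Rightarrow> real) \<Rightarrow> bool" where
  "admissible_weight \<omega> \<longleftrightarrow> (\<forall>n. \<omega> n > 0) \<and> \<omega> 0 = 1 \<and>
     (\<lambda>n. \<omega> (Suc n) / \<omega> n) \<longlonglongrightarrow> 1"

definition H2w :: "(nat \<Rightarrow> real) \<Rightarrow> (nat \<Rightarrow> complex) set" where
  "H2w \<omega> = {a. summable (\<lambda>n. \<omega> n * (cmod (a n))\<^sup>2)}"

definition winner :: "(nat \<Rightarrow> real) \<Rightarrow> (nat \<Rightarrow> complex) \<Rightarrow> (nat \<Rightarrow> complex) \<Rightarrow> complex" where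
  "winner \<omega> a b = (\<Sum>n. complex_of_real (\<omega> n) * a n * cnj (b n))"

definition wnorm :: "(nat \<Rightarrow> real) \<Rightarrow> (nat \<Rightarrow> complex) \<Rightarrow> real" where
  "wnorm \<omega> a = sqrt (\<Sum>n. \<omega> n * (cmod (a n))\<^sup>2)"

definition zmul :: "(nat \<Rightarrow> complex) \<Rightarrow> (nat \<Rightarrow> complex)" where
  "zmul a = (\<lambda>n. if n = 0 then 0 else a (n - 1))"

definition monom_z :: "nat \<Rightarrow> (nat \<Rightarrow> complex)" where
  "monom_z k = (\<lambda>n. if n = k then 1 else 0)"

definition closed_subspace :: "(nat \<Rightarrow> real) \<Rightarrow> (nat \<Rightarrow> complex) set \<Rightarrow> bool" where
  "closed_subspace \<omega> M \<longleftrightarrow>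
     M \<subseteq> H2w \<omega> \<and> (\<lambda>n. 0) \<in> M \<and>
     (\<forall>a\<in>M. \<forall>b\<in>M. (\<lambda>n. a n + b n) \<in> M) \<and>
     (\<forall>c::complex. \<forall>a\<in>M. (\<lambda>n. c * a n) \<in> M) \<and>
     (\<forall>g x. (\<forall>k. g k \<in> M) \<and> x \<in> H2w \<omega> \<and>
            (\<lambda>k. wnorm \<omega> (\<lambda>n. g k n - x n)) \<longlonglongrightarrow> 0 \<longrightarrow> x \<in> M)"

definition z_invariant :: "(nat \<Rightarrow> complex) set \<Rightarrow> bool" where
  "z_invariant M \<longleftrightarrow> (\<forall>a\<in>M. zmul a \<in> M)"

definition orth_compl :: "(nat \<Rightarrow> real) \<Rightarrow> (nat \<Rightarrow> complex) set \<Rightarrow> (nat \<Rightarrow> complex) set" where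
  "orth_compl \<omega> M = {a \<in> H2w \<omega>. \<forall>b\<in>M. winner \<omega> a b = 0}"

definition proj :: "(nat \<Rightarrow> real) \<Rightarrow> (nat \<Rightarrow> complex) set \<Rightarrow> (nat \<Rightarrow> complex) \<Rightarrow> (nat \<Rightarrow> complex)" where
  "proj \<omega> M x = (THE p. p \<in> M \<and> (\<lambda>n. x n - p n) \<in> orth_compl \<omega> M)"

definition H2w_inner :: "(nat \<Rightarrow> real) \<Rightarrow> (nat \<Rightarrow> complex) \<Rightarrow> bool" where
  "H2w_inner \<omega> f \<longleftrightarrow> f \<in> H2w \<omega> \<and> wnorm \<omega> f = 1 \<and>
     (\<forall>m::nat. m \<ge> 1 \<longrightarrow> winner \<omega> ((zmul ^^ m) f) f = 0)"

end

theory Submission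
  imports Defs
begin

text \<open>
  (b) \<Longrightarrow> (a): write \<open>p = P\<^sub>\<M>(z\<^sup>d)\<close>. Since \<open>z\<^sup>k \<perp> \<M>\<close> for \<open>k < d\<close> and \<open>p \<in> \<M>\<close>, the coefficients of \<open>p\<close>
  below \<open>d\<close> vanish. For \<open>m \<ge> 1\<close> the function \<open>z\<^sup>m p\<close> lies in \<open>\<M>\<close>, so
  \<open>\<langle>p, z\<^sup>m p\<rangle> = \<langle>z\<^sup>d, z\<^sup>m p\<rangle> = \<omega>\<^sub>d \<cdot> conj(p\<^sub>d\<^sub>-\<^sub>m) = 0\<close>.

  (a) \<Longrightarrow> (b): take \<open>\<M> = [f]\<close>, the closed span of \<open>{z\<^sup>m f}\<close>, and \<open>d\<close> the order of the zero of \<open>f\<close> at 0.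
  Then \<open>z\<^sup>d - \<langle>z\<^sup>d, f\<rangle> f\<close> is orthogonal to every \<open>z\<^sup>m f\<close>: for \<open>m = 0\<close> because \<open>\<parallel>f\<parallel> = 1\<close>, for
  \<open>m \<ge> 1\<close> by innerness and because \<open>z\<^sup>m f\<close> vanishes to order \<open>> d\<close>. Hence
  \<open>P\<^sub>\<M>(z\<^sup>d) = \<langle>z\<^sup>d, f\<rangle> f\<close> with \<open>\<langle>z\<^sup>d, f\<rangle> = \<omega>\<^sub>d conj(f\<^sub>d) \<noteq> 0\<close>.

  The weight condition is only used to make multiplication by \<open>z\<close> (and its adjoint) bounded,
  so that \<open>[f]\<close> is \<open>z\<close>-invariant; existence of projections comes from the unitary
  identification of the weighted space with \<open>\<ell>\<^sup>2\<close>.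
\<close>

section \<open>Orthogonal projections in real Hilbert spaces\<close>

lemma parallelogram_law:
  fixes a b :: "'a::real_inner"
  shows "(norm (a + b))\<^sup>2 + (norm (a - b))\<^sup>2 = 2 * (norm a)\<^sup>2 + 2 * (norm b)\<^sup>2"
  by (simp add: power2_norm_eq_inner inner_add_left inner_add_right inner_diff_left
      inner_diff_right inner_commute)

lemma convex_almost_nearest_close:
  fixes x :: "'a::real_inner"
  assumes "convex S" "a \<in> S" "b \<in> S"
    and lower: "\<And>s. s \<in> S \<Longrightarrow> \<delta> \<le> (norm (x - s))\<^sup>2"
    and "(norm (x - a))\<^sup>2 \<le> \<delta> + \<epsilon>" "(norm (x - b))\<^sup>2 \<le> \<delta> + \<epsilon>"
  shows "(norm (a - b))\<^sup>2 \<le> 4 * \<epsilon>"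
proof -
  have "(1/2) *\<^sub>R a + (1/2) *\<^sub>R b \<in> S"
    using assms(1-3) by (rule convexD) auto
  then have "\<delta> \<le> (norm (x - (1/2) *\<^sub>R (a + b)))\<^sup>2"
    by (simp add: lower flip: scaleR_right_distrib)
  moreover have "(x - a) + (x - b) = 2 *\<^sub>R (x - (1/2) *\<^sub>R (a + b))"
    by (simp add: algebra_simps scaleR_2)
  ultimately have "4 * \<delta> \<le> (norm ((x - a) + (x - b)))\<^sup>2"
    by (simp add: power2_eq_square)
  moreover have "(norm (a - b))\<^sup>2 = 2 * (norm (x - a))\<^sup>2 + 2 * (norm (x - b))\<^sup>2
      - (norm ((x - a) + (x - b)))\<^sup>2"
    using parallelogram_law[of "x - a" "x - b"] by (simp add: norm_minus_commute)
  ultimately show ?thesis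
    using assms(5,6) by linarith
qed

lemma nearest_point_exists:
  fixes x :: "'a::{real_inner, complete_space}"
  assumes "closed S" "convex S" "S \<noteq> {}"
  obtains p where "p \<in> S" "\<And>s. s \<in> S \<Longrightarrow> norm (x - p) \<le> norm (x - s)"
proof -
  define \<delta> where "\<delta> = (INF s\<in>S. (norm (x - s))\<^sup>2)"
  have bdd: "bdd_below ((\<lambda>s. (norm (x - s))\<^sup>2) ` S)"
    by (rule bdd_belowI2[of _ 0]) simp
  have lower: "\<delta> \<le> (norm (x - s))\<^sup>2" if "s \<in> S" for s
    unfolding \<delta>_def using bdd that by (rule cINF_lower)
  have "\<exists>s\<in>S. (norm (x - s))\<^sup>2 < \<delta> + 1 / Suc k" for k
    using cInf_lessD[of "(\<lambda>s. (norm (x - s))\<^sup>2) ` S" "\<delta> + 1 / Suc k"] assms(3)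
    unfolding \<delta>_def by auto
  then obtain q where q: "\<And>k. q k \<in> S" and near: "\<And>k. (norm (x - q k))\<^sup>2 < \<delta> + 1 / Suc k"
    by metis
  have "Cauchy q"
  proof (rule metric_CauchyI)
    fix e :: real
    assume "e > 0"
    obtain N :: nat where "4 / e\<^sup>2 < N"
      using reals_Archimedean2 by blast
    with \<open>e > 0\<close> have N: "4 / Suc N < e\<^sup>2"
      by (simp add: field_simps add_strict_increasing2)
    have "(norm (x - q k))\<^sup>2 \<le> \<delta> + 1 / Suc N" if "k \<ge> N" for k
      using near[of k] that frac_le[of 1 1 "Suc N" "Suc k"] by simp
    then have close: "(norm (q m - q n))\<^sup>2 < e\<^sup>2" if "m \<ge> N" "n \<ge> N" for m n
      using convex_almost_nearest_close[OF assms(2) q q lower] that N by fastforce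
    have "dist (q m) (q n) < e" if "m \<ge> N" "n \<ge> N" for m n
      using power2_less_imp_less[OF close[OF that] less_imp_le[OF \<open>e > 0\<close>]]
      by (simp add: dist_norm)
    then show "\<exists>N. \<forall>m\<ge>N. \<forall>n\<ge>N. dist (q m) (q n) < e"
      by blast
  qed
  then obtain p where lim: "q \<longlonglongrightarrow> p"
    using Cauchy_convergent_iff convergent_def by blast
  have nearest: "(norm (x - p))\<^sup>2 \<le> \<delta>"
  proof (rule LIMSEQ_le)
    show "(\<lambda>k. (norm (x - q k))\<^sup>2) \<longlonglongrightarrow> (norm (x - p))\<^sup>2"
      by (intro tendsto_intros lim)
    show "(\<lambda>k. \<delta> + 1 / Suc k) \<longlonglongrightarrow> \<delta>"
      using tendsto_add[OF tendsto_const LIMSEQ_Suc[OF lim_inverse_n']] by simp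
    show "\<exists>N. \<forall>k\<ge>N. (norm (x - q k))\<^sup>2 \<le> \<delta> + 1 / Suc k"
      using near less_imp_le by blast
  qed
  have "norm (x - p) \<le> norm (x - s)" if "s \<in> S" for s
    using power2_le_imp_le[OF order_trans[OF nearest lower[OF that]] norm_ge_zero] .
  with closed_sequentially[OF assms(1) q lim] show ?thesis
    using that by blast
qed

lemma nearest_point_orthogonal:
  fixes x :: "'a::real_inner"
  assumes "subspace S" "p \<in> S" "s \<in> S"
    and nearest: "\<And>s. s \<in> S \<Longrightarrow> norm (x - p) \<le> norm (x - s)"
  shows "inner (x - p) s = 0"
proof (cases "s = 0")
  case False
  then have ns: "(norm s)\<^sup>2 > 0"
    by simp
  define t where "t = inner (x - p) s / (norm s)\<^sup>2"
  have "p + t *\<^sub>R s \<in> S"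
    using assms(1-3) by (simp add: subspace_add subspace_scale)
  from nearest[OF this] have "(norm (x - p))\<^sup>2 \<le> (norm ((x - p) - t *\<^sub>R s))\<^sup>2"
    by (simp add: power_mono diff_diff_eq)
  also have "\<dots> = (norm (x - p))\<^sup>2 - 2 * t * inner (x - p) s + t\<^sup>2 * (norm s)\<^sup>2"
    unfolding power2_norm_eq_inner
    by (simp add: inner_diff_left inner_diff_right inner_commute power2_eq_square algebra_simps)
  also have "\<dots> = (norm (x - p))\<^sup>2 - (inner (x - p) s)\<^sup>2 / (norm s)\<^sup>2"
    using ns unfolding t_def by (simp add: power2_eq_square field_simps)
  finally have "(inner (x - p) s)\<^sup>2 / (norm s)\<^sup>2 \<le> 0"
    by simp
  with ns show ?thesis
    by (simp add: divide_le_0_iff)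
qed simp

lemma orthogonal_projection_exists:
  fixes x :: "'a::{real_inner, complete_space}"
  assumes "closed S" "subspace S"
  obtains p where "p \<in> S" "\<And>s. s \<in> S \<Longrightarrow> inner (x - p) s = 0"
proof -
  obtain p where "p \<in> S" "\<And>s. s \<in> S \<Longrightarrow> norm (x - p) \<le> norm (x - s)"
    using nearest_point_exists[OF assms(1) subspace_imp_convex[OF assms(2)]] subspace_0[OF assms(2)]
    by blast
  with nearest_point_orthogonal[OF assms(2)] that show ?thesis
    by blast
qed

lemma mem_H2w_iff: "a \<in> H2w \<omega> \<longleftrightarrow> summable (\<lambda>n. \<omega> n * (cmod (a n))\<^sup>2)"
  by (simp add: H2w_def)

lemma closed_subspaceD:
  assumes "closed_subspace \<omega> M"
  shows closed_subspace_subset: "M \<subseteq> H2w \<omega>"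
    and closed_subspace_zero: "(\<lambda>n. 0) \<in> M"
    and closed_subspace_add: "a \<in> M \<Longrightarrow> b \<in> M \<Longrightarrow> (\<lambda>n. a n + b n) \<in> M"
    and closed_subspace_scale: "a \<in> M \<Longrightarrow> (\<lambda>n. c * a n) \<in> M"
    and closed_subspace_limit: "(\<And>k. g k \<in> M) \<Longrightarrow> x \<in> H2w \<omega> \<Longrightarrow>
      (\<lambda>k. wnorm \<omega> (\<lambda>n. g k n - x n)) \<longlonglongrightarrow> 0 \<Longrightarrow> x \<in> M"
  using assms unfolding closed_subspace_def by blast+

lemma zmul_pow_apply: "(zmul ^^ m) a n = (if m \<le> n then a (n - m) else 0)"
proof (induction m arbitrary: n)
  case (Suc m)
  then show ?case
    by (cases n) (auto simp: zmul_def)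
qed simp

lemma z_invariant_zmul_pow: "z_invariant M \<Longrightarrow> p \<in> M \<Longrightarrow> (zmul ^^ m) p \<in> M"
  by (induction m) (auto simp: z_invariant_def)

text \<open>The closed linear span of the orbit \<open>{z\<^sup>m f}\<close>, realised as its double
  orthogonal complement.\<close>
definition cyclic_subspace :: "(nat \<Rightarrow> real) \<Rightarrow> (nat \<Rightarrow> complex) \<Rightarrow> (nat \<Rightarrow> complex) set" where
  "cyclic_subspace \<omega> f = orth_compl \<omega> (orth_compl \<omega> (range (\<lambda>m. (zmul ^^ m) f)))"

locale weight =
  fixes \<omega> :: "nat \<Rightarrow> real"
  assumes weight_pos: "\<And>n. \<omega> n > 0"
begin

lemma weight_nonneg: "\<omega> n \<ge> 0"
  using weight_pos[of n] by simp

lemma summable_norm_winner: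
  assumes "a \<in> H2w \<omega>" "b \<in> H2w \<omega>"
  shows "summable (\<lambda>n. norm (complex_of_real (\<omega> n) * a n * cnj (b n)))"
proof (rule summable_comparison_test'[where N = 0])
  show "summable (\<lambda>n. (\<omega> n * (cmod (a n))\<^sup>2 + \<omega> n * (cmod (b n))\<^sup>2) / 2)"
    using assms by (intro summable_divide summable_add) (auto simp: mem_H2w_iff)
  have "cmod (a n) * cmod (b n) \<le> ((cmod (a n))\<^sup>2 + (cmod (b n))\<^sup>2) / 2" for n
    using sum_squares_bound[of "cmod (a n)" "cmod (b n)"] by (simp add: power2_eq_square)
  from mult_left_mono[OF this weight_nonneg]
  show "norm (norm (complex_of_real (\<omega> n) * a n * cnj (b n)))
        \<le> (\<omega> n * (cmod (a n))\<^sup>2 + \<omega> n * (cmod (b n))\<^sup>2) / 2" for n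
    by (simp add: norm_mult abs_of_nonneg weight_nonneg algebra_simps)
qed

lemma summable_winner:
  assumes "a \<in> H2w \<omega>" "b \<in> H2w \<omega>"
  shows "summable (\<lambda>n. complex_of_real (\<omega> n) * a n * cnj (b n))"
  by (rule summable_norm_cancel[OF summable_norm_winner[OF assms]])

lemma H2w_zero: "(\<lambda>n. 0) \<in> H2w \<omega>"
  by (simp add: mem_H2w_iff)

lemma H2w_monom_z: "monom_z k \<in> H2w \<omega>"
proof -
  have "summable (\<lambda>n. if n = k then \<omega> k else 0)" by simp
  then show ?thesis
    unfolding mem_H2w_iff by (rule summable_cong[THEN iffD1, rotated]) (simp add: monom_z_def)
qed

lemma H2w_scale:
  assumes "a \<in> H2w \<omega>"
  shows "(\<lambda>n. c * a n) \<in> H2w \<omega>"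
proof -
  have "summable (\<lambda>n. (cmod c)\<^sup>2 * (\<omega> n * (cmod (a n))\<^sup>2))"
    using assms by (intro summable_mult) (simp add: mem_H2w_iff)
  then show ?thesis
    unfolding mem_H2w_iff by (simp add: norm_mult power_mult_distrib algebra_simps)
qed

lemma H2w_add:
  assumes "a \<in> H2w \<omega>" "b \<in> H2w \<omega>"
  shows "(\<lambda>n. a n + b n) \<in> H2w \<omega>"
  unfolding mem_H2w_iff
proof (rule summable_comparison_test'[where N = 0])
  show "summable (\<lambda>n. 2 * (\<omega> n * (cmod (a n))\<^sup>2) + 2 * (\<omega> n * (cmod (b n))\<^sup>2))"
    using assms by (intro summable_mult summable_add) (auto simp: mem_H2w_iff)
  have "(cmod (a n + b n))\<^sup>2 \<le> 2 * (cmod (a n))\<^sup>2 + 2 * (cmod (b n))\<^sup>2" for n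
  proof -
    have "(cmod (a n + b n))\<^sup>2 \<le> (cmod (a n) + cmod (b n))\<^sup>2"
      by (simp add: norm_triangle_ineq power_mono)
    also have "\<dots> \<le> 2 * (cmod (a n))\<^sup>2 + 2 * (cmod (b n))\<^sup>2"
      using sum_squares_bound[of "cmod (a n)" "cmod (b n)"] by (simp add: power2_eq_square algebra_simps)
    finally show ?thesis .
  qed
  from mult_left_mono[OF this weight_nonneg]
  show "norm (\<omega> n * (cmod (a n + b n))\<^sup>2)
        \<le> 2 * (\<omega> n * (cmod (a n))\<^sup>2) + 2 * (\<omega> n * (cmod (b n))\<^sup>2)" for n
    by (simp add: weight_nonneg algebra_simps)
qed

lemma H2w_diff:
  assumes "a \<in> H2w \<omega>" "b \<in> H2w \<omega>"
  shows "(\<lambda>n. a n - b n) \<in> H2w \<omega>"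
  using H2w_add[OF assms(1) H2w_scale[OF assms(2), of "-1"]] by simp

lemma winner_add_left:
  assumes "a \<in> H2w \<omega>" "b \<in> H2w \<omega>" "c \<in> H2w \<omega>"
  shows "winner \<omega> (\<lambda>n. a n + b n) c = winner \<omega> a c + winner \<omega> b c"
  unfolding winner_def using suminf_add[OF summable_winner[OF assms(1,3)] summable_winner[OF assms(2,3)]]
  by (simp add: algebra_simps)

lemma winner_diff_left:
  assumes "a \<in> H2w \<omega>" "b \<in> H2w \<omega>" "c \<in> H2w \<omega>"
  shows "winner \<omega> (\<lambda>n. a n - b n) c = winner \<omega> a c - winner \<omega> b c"
  unfolding winner_def using suminf_diff[OF summable_winner[OF assms(1,3)] summable_winner[OF assms(2,3)]]
  by (simp add: algebra_simps)

lemma winner_scale_left: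
  assumes "a \<in> H2w \<omega>" "b \<in> H2w \<omega>"
  shows "winner \<omega> (\<lambda>n. c * a n) b = c * winner \<omega> a b"
  unfolding winner_def using suminf_mult[OF summable_winner[OF assms], of c]
  by (simp add: algebra_simps)

lemma winner_commute:
  assumes "a \<in> H2w \<omega>" "b \<in> H2w \<omega>"
  shows "winner \<omega> b a = cnj (winner \<omega> a b)"
proof -
  have "(\<lambda>n. cnj (complex_of_real (\<omega> n) * a n * cnj (b n))) sums cnj (winner \<omega> a b)"
    unfolding winner_def by (intro sums_cnj[THEN iffD2] summable_sums summable_winner assms)
  then show ?thesis
    unfolding winner_def by (intro sums_unique[symmetric]) (simp add: algebra_simps)
qed

lemma winner_scale_right:
  assumes "a \<in> H2w \<omega>" "b \<in> H2w \<omega>"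
  shows "winner \<omega> a (\<lambda>n. c * b n) = cnj c * winner \<omega> a b"
  using winner_commute[OF H2w_scale[OF assms(2)] assms(1)] winner_scale_left[OF assms(2,1)]
    winner_commute[OF assms(2,1)] by simp

lemma winner_self:
  assumes "a \<in> H2w \<omega>"
  shows "winner \<omega> a a = complex_of_real ((wnorm \<omega> a)\<^sup>2)"
proof -
  have s: "summable (\<lambda>n. \<omega> n * (cmod (a n))\<^sup>2)"
    using assms by (simp add: mem_H2w_iff)
  have "(\<Sum>n. \<omega> n * (cmod (a n))\<^sup>2) \<ge> 0"
    by (intro suminf_nonneg[OF s]) (simp add: weight_nonneg)
  then have "(wnorm \<omega> a)\<^sup>2 = (\<Sum>n. \<omega> n * (cmod (a n))\<^sup>2)"
    unfolding wnorm_def by simp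
  then have "complex_of_real ((wnorm \<omega> a)\<^sup>2) = (\<Sum>n. complex_of_real (\<omega> n * (cmod (a n))\<^sup>2))"
    using suminf_of_real[OF s] by simp
  also have "\<dots> = winner \<omega> a a"
    unfolding winner_def by (simp only: of_real_mult complex_norm_square mult.assoc)
  finally show ?thesis by simp
qed

lemma wnorm_nonneg:
  assumes "a \<in> H2w \<omega>"
  shows "wnorm \<omega> a \<ge> 0"
  using assms by (simp add: wnorm_def mem_H2w_iff suminf_nonneg weight_nonneg)

lemma wnorm_diff_commute: "wnorm \<omega> (\<lambda>n. a n - b n) = wnorm \<omega> (\<lambda>n. b n - a n)"
  by (simp add: wnorm_def norm_minus_commute)

lemma winner_self_eq_0:
  assumes "a \<in> H2w \<omega>" "winner \<omega> a a = 0"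
  shows "a = (\<lambda>n. 0)"
proof -
  have s: "summable (\<lambda>n. \<omega> n * (cmod (a n))\<^sup>2)"
    using assms by (simp add: mem_H2w_iff)
  have "wnorm \<omega> a = 0"
    using assms winner_self[OF assms(1)] by simp
  then have "(\<Sum>n. \<omega> n * (cmod (a n))\<^sup>2) = 0"
    by (simp add: wnorm_def)
  then have "\<omega> n * (cmod (a n))\<^sup>2 = 0" for n
    using suminf_eq_zero_iff[OF s] weight_nonneg by simp
  then show ?thesis
    using weight_pos by (metis less_irrefl mult_eq_0_iff zero_eq_power2 norm_eq_zero)
qed

lemma winner_monom_z_left: "winner \<omega> (monom_z k) a = \<omega> k * cnj (a k)"
  unfolding winner_def by (subst suminf_finite[of "{k}"]) (auto simp: monom_z_def)

end

section \<open>The sequence space \<open>\<ell>\<^sup>2\<close>\<close>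

interpretation unit_weight: weight "\<lambda>_. 1"
  by standard simp

typedef ell2 = "H2w (\<lambda>_. 1)" morphisms ell2_coeff Abs_ell2
  using unit_weight.H2w_zero by blast

setup_lifting type_definition_ell2

instantiation ell2 :: real_vector
begin
lift_definition zero_ell2 :: ell2 is "\<lambda>n. 0"
  by (rule unit_weight.H2w_zero)
lift_definition plus_ell2 :: "ell2 \<Rightarrow> ell2 \<Rightarrow> ell2" is "\<lambda>a b n. a n + b n"
  by (rule unit_weight.H2w_add)
lift_definition minus_ell2 :: "ell2 \<Rightarrow> ell2 \<Rightarrow> ell2" is "\<lambda>a b n. a n - b n"
  by (rule unit_weight.H2w_diff)
lift_definition uminus_ell2 :: "ell2 \<Rightarrow> ell2" is "\<lambda>a n. - a n"
  using unit_weight.H2w_scale[of _ "-1"] by simp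
lift_definition scaleR_ell2 :: "real \<Rightarrow> ell2 \<Rightarrow> ell2" is "\<lambda>r a n. complex_of_real r * a n"
  by (rule unit_weight.H2w_scale)
instance
  by standard (transfer; auto simp: algebra_simps fun_eq_iff)+
end

lemma ell2_coeff_in_H2w: "ell2_coeff x \<in> H2w (\<lambda>_. 1)"
  using ell2_coeff by simp

instantiation ell2 :: real_inner
begin
definition inner_ell2 :: "ell2 \<Rightarrow> ell2 \<Rightarrow> real" where
  "inner_ell2 x y = Re (winner (\<lambda>_. 1) (ell2_coeff x) (ell2_coeff y))"
definition norm_ell2 :: "ell2 \<Rightarrow> real" where
  "norm_ell2 x = sqrt (inner x x)"
definition sgn_ell2 :: "ell2 \<Rightarrow> ell2" where
  "sgn_ell2 x = x /\<^sub>R norm x"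
definition dist_ell2 :: "ell2 \<Rightarrow> ell2 \<Rightarrow> real" where
  "dist_ell2 x y = norm (x - y)"
definition uniformity_ell2 :: "(ell2 \<times> ell2) filter" where
  "uniformity_ell2 = (INF e\<in>{0<..}. principal {(x, y). dist x y < e})"
definition open_ell2 :: "ell2 set \<Rightarrow> bool" where
  "open_ell2 U \<longleftrightarrow> (\<forall>x\<in>U. eventually (\<lambda>(x', y). x' = x \<longrightarrow> y \<in> U) uniformity)"
instance
proof
  fix x y z :: ell2 and r :: real
  show "inner x y = inner y x"
    unfolding inner_ell2_def using unit_weight.winner_commute[OF ell2_coeff_in_H2w ell2_coeff_in_H2w, of x y]
    by simp
  show "inner (x + y) z = inner x z + inner y z"
    unfolding inner_ell2_def plus_ell2.rep_eq
    using unit_weight.winner_add_left[OF ell2_coeff_in_H2w ell2_coeff_in_H2w ell2_coeff_in_H2w] by simp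
  show "inner (r *\<^sub>R x) y = r * inner x y"
    unfolding inner_ell2_def scaleR_ell2.rep_eq
    using unit_weight.winner_scale_left[OF ell2_coeff_in_H2w ell2_coeff_in_H2w] by simp
  show "0 \<le> inner x x"
    unfolding inner_ell2_def using unit_weight.winner_self[OF ell2_coeff_in_H2w] by simp
  show "inner x x = 0 \<longleftrightarrow> x = 0"
  proof
    assume "inner x x = 0"
    then have "winner (\<lambda>_. 1) (ell2_coeff x) (ell2_coeff x) = 0"
      unfolding inner_ell2_def using unit_weight.winner_self[OF ell2_coeff_in_H2w, of x] by simp
    then have "ell2_coeff x = ell2_coeff 0"
      using unit_weight.winner_self_eq_0[OF ell2_coeff_in_H2w] zero_ell2.rep_eq by simp
    then show "x = 0"
      using ell2_coeff_inject by blast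
  qed (simp add: inner_ell2_def winner_def zero_ell2.rep_eq)
  show "norm x = sqrt (inner x x)"
    by (simp add: norm_ell2_def)
qed (simp_all add: sgn_ell2_def dist_ell2_def uniformity_ell2_def open_ell2_def)
end

lemma summable_ell2_coeff: "summable (\<lambda>n. (cmod (ell2_coeff x n))\<^sup>2)"
  using ell2_coeff_in_H2w[of x] by (simp add: mem_H2w_iff)

lemma norm_ell2_sq: "(norm x)\<^sup>2 = (\<Sum>n. (cmod (ell2_coeff x n))\<^sup>2)"
proof -
  have "(norm x)\<^sup>2 = (wnorm (\<lambda>_. 1) (ell2_coeff x))\<^sup>2"
    using unit_weight.winner_self[OF ell2_coeff_in_H2w]
    by (simp add: power2_norm_eq_inner inner_ell2_def)
  also have "\<dots> = (\<Sum>n. (cmod (ell2_coeff x n))\<^sup>2)"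
    by (simp add: wnorm_def suminf_nonneg[OF summable_ell2_coeff])
  finally show ?thesis .
qed

lemma sum_ell2_coeff_le:
  assumes "finite I"
  shows "(\<Sum>n\<in>I. (cmod (ell2_coeff x n))\<^sup>2) \<le> (norm x)\<^sup>2"
  unfolding norm_ell2_sq by (rule sum_le_suminf[OF summable_ell2_coeff assms]) auto

lemma norm_ell2_coeff_le: "cmod (ell2_coeff x n) \<le> norm x"
  using sum_ell2_coeff_le[of "{n}" x] by (simp add: power2_le_iff_abs_le)

lemma ell2_coeff_diff: "ell2_coeff (x - y) n = ell2_coeff x n - ell2_coeff y n"
  by (simp add: minus_ell2.rep_eq)

lemma Cauchy_ell2_coeff:
  assumes "Cauchy X"
  shows "Cauchy (\<lambda>k. ell2_coeff (X k) n)"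
proof (rule metric_CauchyI)
  fix e :: real assume "e > 0"
  then obtain M where "\<forall>j\<ge>M. \<forall>k\<ge>M. dist (X j) (X k) < e"
    using assms unfolding Cauchy_def by blast
  then have "dist (ell2_coeff (X j) n) (ell2_coeff (X k) n) < e" if "j \<ge> M" "k \<ge> M" for j k
    using norm_ell2_coeff_le[of "X j - X k" n] that
    by (fastforce simp: dist_norm ell2_coeff_diff)
  then show "\<exists>M. \<forall>j\<ge>M. \<forall>k\<ge>M. dist (ell2_coeff (X j) n) (ell2_coeff (X k) n) < e"
    by blast
qed

lemma coordinate_limit_dist_le:
  assumes lim: "\<And>n. (\<lambda>j. ell2_coeff (X j) n) \<longlonglongrightarrow> a n"
    and close: "\<And>j. j \<ge> N \<Longrightarrow> norm (X j - y) \<le> e"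
  shows "(\<lambda>n. a n - ell2_coeff y n) \<in> H2w (\<lambda>_. 1)"
    and "(\<Sum>n. (cmod (a n - ell2_coeff y n))\<^sup>2) \<le> e\<^sup>2"
proof -
  have partial: "(\<Sum>n<L. (cmod (a n - ell2_coeff y n))\<^sup>2) \<le> e\<^sup>2" for L
  proof (rule LIMSEQ_le_const2)
    show "(\<lambda>j. \<Sum>n<L. (cmod (ell2_coeff (X j - y) n))\<^sup>2)
        \<longlonglongrightarrow> (\<Sum>n<L. (cmod (a n - ell2_coeff y n))\<^sup>2)"
      unfolding ell2_coeff_diff by (intro tendsto_intros lim)
    have "(\<Sum>n<L. (cmod (ell2_coeff (X j - y) n))\<^sup>2) \<le> e\<^sup>2" if "j \<ge> N" for j
      using sum_ell2_coeff_le[of "{..<L}" "X j - y"] power_mono[OF close[OF that] norm_ge_zero, of 2]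
      by simp
    then show "\<exists>N. \<forall>j\<ge>N. (\<Sum>n<L. (cmod (ell2_coeff (X j - y) n))\<^sup>2) \<le> e\<^sup>2"
      by blast
  qed
  have s: "summable (\<lambda>n. (cmod (a n - ell2_coeff y n))\<^sup>2)"
    by (rule bounded_imp_summable[where B = "e\<^sup>2"])
      (use partial[of "Suc _"] in \<open>auto simp: lessThan_Suc_atMost\<close>)
  then show "(\<lambda>n. a n - ell2_coeff y n) \<in> H2w (\<lambda>_. 1)"
    by (simp add: mem_H2w_iff)
  show "(\<Sum>n. (cmod (a n - ell2_coeff y n))\<^sup>2) \<le> e\<^sup>2"
    by (rule suminf_le_const[OF s partial])
qed

instance ell2 :: complete_space
proof
  fix X :: "nat \<Rightarrow> ell2"
  assume X: "Cauchy X"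
  define a where "a n = lim (\<lambda>k. ell2_coeff (X k) n)" for n
  have lim: "(\<lambda>k. ell2_coeff (X k) n) \<longlonglongrightarrow> a n" for n
    using Cauchy_convergent[OF Cauchy_ell2_coeff[OF X]]
    unfolding a_def by (simp add: convergent_LIMSEQ_iff)
  have tail: "\<exists>N. \<forall>k\<ge>N. (\<lambda>n. a n - ell2_coeff (X k) n) \<in> H2w (\<lambda>_. 1) \<and>
      (\<Sum>n. (cmod (a n - ell2_coeff (X k) n))\<^sup>2) \<le> e\<^sup>2" if "e > 0" for e
  proof -
    obtain N where "\<forall>j\<ge>N. \<forall>k\<ge>N. dist (X j) (X k) < e"
      using X \<open>e > 0\<close> unfolding Cauchy_def by blast
    then have "norm (X j - X k) \<le> e" if "j \<ge> N" "k \<ge> N" for j k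
      using that by (fastforce simp: dist_norm)
    then show ?thesis
      using coordinate_limit_dist_le[OF lim] by blast
  qed
  obtain N where "(\<lambda>n. a n - ell2_coeff (X N) n) \<in> H2w (\<lambda>_. 1)"
    using tail[of 1] by auto
  from unit_weight.H2w_add[OF this ell2_coeff_in_H2w[of "X N"]]
  have a: "ell2_coeff (Abs_ell2 a) = a"
    by (simp add: Abs_ell2_inverse)
  have "X \<longlonglongrightarrow> Abs_ell2 a"
  proof (rule metric_LIMSEQ_I)
    fix r :: real
    assume "r > 0"
    then obtain N where N: "\<forall>k\<ge>N. (\<Sum>n. (cmod (a n - ell2_coeff (X k) n))\<^sup>2) \<le> (r / 2)\<^sup>2"
      using tail[of "r / 2"] by auto
    have "dist (X k) (Abs_ell2 a) < r" if "k \<ge> N" for k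
    proof -
      have "(dist (X k) (Abs_ell2 a))\<^sup>2 = (\<Sum>n. (cmod (a n - ell2_coeff (X k) n))\<^sup>2)"
        by (simp add: dist_norm norm_ell2_sq ell2_coeff_diff a norm_minus_commute)
      with N that have "(dist (X k) (Abs_ell2 a))\<^sup>2 \<le> (r / 2)\<^sup>2"
        by simp
      then have "dist (X k) (Abs_ell2 a) \<le> r / 2"
        by (rule power2_le_imp_le) (use \<open>r > 0\<close> in simp)
      then show ?thesis
        using \<open>r > 0\<close> by simp
    qed
    then show "\<exists>N. \<forall>k\<ge>N. dist (X k) (Abs_ell2 a) < r"
      by blast
  qed
  then show "convergent X"
    unfolding convergent_def by blast
qed

context weight
begin

definition to_ell2 :: "(nat \<Rightarrow> complex) \<Rightarrow> ell2" where
  "to_ell2 a = Abs_ell2 (\<lambda>n. complex_of_real (sqrt (\<omega> n)) * a n)"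

lemma ell2_coeff_to_ell2:
  assumes "a \<in> H2w \<omega>"
  shows "ell2_coeff (to_ell2 a) = (\<lambda>n. complex_of_real (sqrt (\<omega> n)) * a n)"
  unfolding to_ell2_def using assms
  by (intro Abs_ell2_inverse) (simp add: mem_H2w_iff norm_mult power_mult_distrib weight_nonneg)

lemma inner_to_ell2:
  assumes "a \<in> H2w \<omega>" "b \<in> H2w \<omega>"
  shows "inner (to_ell2 a) (to_ell2 b) = Re (winner \<omega> a b)"
proof -
  have "complex_of_real (sqrt (\<omega> n)) * complex_of_real (sqrt (\<omega> n)) = complex_of_real (\<omega> n)" for n
    by (simp add: weight_nonneg flip: of_real_mult)
  then show ?thesis
    by (simp add: inner_ell2_def winner_def ell2_coeff_to_ell2 assms algebra_simps)
qed

lemma norm_to_ell2: "a \<in> H2w \<omega> \<Longrightarrow> norm (to_ell2 a) = wnorm \<omega> a"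
  by (simp add: norm_eq_sqrt_inner inner_to_ell2 winner_self wnorm_nonneg)

lemma to_ell2_add: "a \<in> H2w \<omega> \<Longrightarrow> b \<in> H2w \<omega> \<Longrightarrow> to_ell2 (\<lambda>n. a n + b n) = to_ell2 a + to_ell2 b"
  by (simp add: ell2_coeff_inject[symmetric] plus_ell2.rep_eq ell2_coeff_to_ell2 H2w_add algebra_simps)

lemma to_ell2_diff: "a \<in> H2w \<omega> \<Longrightarrow> b \<in> H2w \<omega> \<Longrightarrow> to_ell2 (\<lambda>n. a n - b n) = to_ell2 a - to_ell2 b"
  by (simp add: ell2_coeff_inject[symmetric] minus_ell2.rep_eq ell2_coeff_to_ell2 H2w_diff algebra_simps)

lemma to_ell2_scaleR: "a \<in> H2w \<omega> \<Longrightarrow> to_ell2 (\<lambda>n. complex_of_real r * a n) = r *\<^sub>R to_ell2 a"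
  by (simp add: ell2_coeff_inject[symmetric] scaleR_ell2.rep_eq ell2_coeff_to_ell2 H2w_scale algebra_simps)

lemma to_ell2_zero: "to_ell2 (\<lambda>n. 0) = 0"
  by (simp add: ell2_coeff_inject[symmetric] zero_ell2.rep_eq ell2_coeff_to_ell2 H2w_zero)

lemma to_ell2_surj: "\<exists>a\<in>H2w \<omega>. y = to_ell2 a"
proof -
  define a where "a n = ell2_coeff y n / complex_of_real (sqrt (\<omega> n))" for n
  have y: "ell2_coeff y = (\<lambda>n. complex_of_real (sqrt (\<omega> n)) * a n)"
    using weight_pos by (auto simp: a_def fun_eq_iff less_imp_neq[symmetric])
  have "a \<in> H2w \<omega>"
    using summable_ell2_coeff[of y] unfolding mem_H2w_iff y
    by (simp add: norm_mult power_mult_distrib weight_nonneg)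
  moreover have "y = to_ell2 a"
    by (simp add: ell2_coeff_inject[symmetric] ell2_coeff_to_ell2[OF \<open>a \<in> H2w \<omega>\<close>] y)
  ultimately show ?thesis
    by blast
qed

lemma subspace_to_ell2_image:
  assumes "closed_subspace \<omega> M"
  shows "subspace (to_ell2 ` M)"
  unfolding subspace_def
proof (intro conjI ballI allI)
  show "0 \<in> to_ell2 ` M"
    using closed_subspace_zero[OF assms] to_ell2_zero by (metis image_eqI)
  show "x + y \<in> to_ell2 ` M" if xy: "x \<in> to_ell2 ` M" "y \<in> to_ell2 ` M" for x y
  proof -
    obtain a b where "a \<in> M" "b \<in> M" "x = to_ell2 a" "y = to_ell2 b"
      using xy by blast
    moreover from this have "x + y = to_ell2 (\<lambda>n. a n + b n)"
      using closed_subspace_subset[OF assms] by (simp add: to_ell2_add subset_iff)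
    ultimately show ?thesis
      using closed_subspace_add[OF assms] by blast
  qed
  show "c *\<^sub>R x \<in> to_ell2 ` M" if x: "x \<in> to_ell2 ` M" for c x
  proof -
    obtain a where "a \<in> M" "x = to_ell2 a"
      using x by blast
    moreover from this have "c *\<^sub>R x = to_ell2 (\<lambda>n. complex_of_real c * a n)"
      using closed_subspace_subset[OF assms] by (simp add: to_ell2_scaleR subset_iff)
    ultimately show ?thesis
      using closed_subspace_scale[OF assms] by blast
  qed
qed

lemma closed_to_ell2_image:
  assumes "closed_subspace \<omega> M"
  shows "closed (to_ell2 ` M)"
  unfolding closed_sequential_limits
proof (intro allI impI, elim conjE)
  fix ys l
  assume "\<forall>k. ys k \<in> to_ell2 ` M" and lim: "ys \<longlonglongrightarrow> l"
  then have "\<forall>k. \<exists>m. m \<in> M \<and> ys k = to_ell2 m"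
    by blast
  then obtain g where g: "\<And>k. g k \<in> M" "\<And>k. ys k = to_ell2 (g k)"
    by metis
  obtain x where x: "x \<in> H2w \<omega>" "l = to_ell2 x"
    using to_ell2_surj by blast
  have "norm (ys k - l) = wnorm \<omega> (\<lambda>n. g k n - x n)" for k
    using g closed_subspace_subset[OF assms] x
    by (simp add: subset_iff norm_to_ell2 H2w_diff flip: to_ell2_diff)
  moreover have "(\<lambda>k. norm (ys k - l)) \<longlonglongrightarrow> 0"
    by (intro tendsto_norm_zero LIM_zero lim)
  ultimately have "x \<in> M"
    using closed_subspace_limit[OF assms g(1) x(1)] by simp
  then show "l \<in> to_ell2 ` M"
    using x(2) by blast
qed

lemma orthogonal_projection_H2w:
  assumes M: "closed_subspace \<omega> M" and x: "x \<in> H2w \<omega>"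
  shows "\<exists>p\<in>M. (\<lambda>n. x n - p n) \<in> orth_compl \<omega> M"
proof -
  note M_H2w = closed_subspace_subset[OF M]
  obtain q where q: "q \<in> to_ell2 ` M" "\<And>s. s \<in> to_ell2 ` M \<Longrightarrow> inner (to_ell2 x - q) s = 0"
    using orthogonal_projection_exists[OF closed_to_ell2_image[OF M] subspace_to_ell2_image[OF M]]
    by blast
  then obtain p where p: "p \<in> M" "q = to_ell2 p"
    by blast
  have pH: "p \<in> H2w \<omega>" and dH: "(\<lambda>n. x n - p n) \<in> H2w \<omega>"
    using p M_H2w x by (auto intro: H2w_diff)
  have re: "Re (winner \<omega> (\<lambda>n. x n - p n) m) = 0" if "m \<in> M" for m
    using q(2)[of "to_ell2 m"] that M_H2w p(2)
    by (auto simp: inner_to_ell2 dH to_ell2_diff[OF x pH, symmetric])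
  have "winner \<omega> (\<lambda>n. x n - p n) m = 0" if m: "m \<in> M" for m
  proof -
    have "m \<in> H2w \<omega>"
      using m M_H2w by blast
    from re[OF closed_subspace_scale[OF M m, of \<i>]] have "Im (winner \<omega> (\<lambda>n. x n - p n) m) = 0"
      by (simp add: winner_scale_right[OF dH \<open>m \<in> H2w \<omega>\<close>])
    with re[OF m] show ?thesis
      by (simp add: complex_eq_iff)
  qed
  with p(1) dH show ?thesis
    unfolding orth_compl_def by blast
qed

lemma orthogonal_projection_unique:
  assumes M: "closed_subspace \<omega> M" and x: "x \<in> H2w \<omega>"
    and p: "p \<in> M" "(\<lambda>n. x n - p n) \<in> orth_compl \<omega> M"
    and q: "q \<in> M" "(\<lambda>n. x n - q n) \<in> orth_compl \<omega> M"
  shows "p = q"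
proof -
  note M_H2w = closed_subspace_subset[OF M]
  have pH: "p \<in> H2w \<omega>" and qH: "q \<in> H2w \<omega>"
    using p q M_H2w by auto
  have dM: "(\<lambda>n. p n - q n) \<in> M"
    using closed_subspace_add[OF M p(1) closed_subspace_scale[OF M q(1), of "-1"]] by simp
  then have "winner \<omega> (\<lambda>n. x n - q n) (\<lambda>n. p n - q n) = 0"
    and "winner \<omega> (\<lambda>n. x n - p n) (\<lambda>n. p n - q n) = 0"
    using p(2) q(2) unfolding orth_compl_def by blast+
  then have "winner \<omega> (\<lambda>n. (x n - q n) - (x n - p n)) (\<lambda>n. p n - q n) = 0"
    using dM M_H2w by (subst winner_diff_left) (auto intro: H2w_diff x pH qH)
  then have "(\<lambda>n. p n - q n) = (\<lambda>n. 0)"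
    using dM M_H2w by (intro winner_self_eq_0) auto
  then show ?thesis
    by (simp add: fun_eq_iff)
qed

lemma proj_mem:
  assumes "closed_subspace \<omega> M" "x \<in> H2w \<omega>"
  shows "proj \<omega> M x \<in> M" and "(\<lambda>n. x n - proj \<omega> M x n) \<in> orth_compl \<omega> M"
proof -
  have "\<exists>!p. p \<in> M \<and> (\<lambda>n. x n - p n) \<in> orth_compl \<omega> M"
    using orthogonal_projection_H2w[OF assms] orthogonal_projection_unique[OF assms] by blast
  then have "proj \<omega> M x \<in> M \<and> (\<lambda>n. x n - proj \<omega> M x n) \<in> orth_compl \<omega> M"
    unfolding proj_def by (rule theI')
  then show "proj \<omega> M x \<in> M" and "(\<lambda>n. x n - proj \<omega> M x n) \<in> orth_compl \<omega> M"
    by blast+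
qed

lemma proj_eqI:
  assumes "closed_subspace \<omega> M" "x \<in> H2w \<omega>" "p \<in> M" "(\<lambda>n. x n - p n) \<in> orth_compl \<omega> M"
  shows "proj \<omega> M x = p"
  using orthogonal_projection_unique[OF assms(1,2) proj_mem[OF assms(1,2)] assms(3,4)] .

lemma norm_winner_le:
  assumes a: "a \<in> H2w \<omega>" and b: "b \<in> H2w \<omega>"
  shows "cmod (winner \<omega> a b) \<le> wnorm \<omega> a * wnorm \<omega> b"
proof -
  define A where "A n = complex_of_real (cmod (a n))" for n
  define B where "B n = complex_of_real (cmod (b n))" for n
  have AB: "A \<in> H2w \<omega>" "B \<in> H2w \<omega>"
    using a b by (simp_all add: A_def B_def mem_H2w_iff)
  have "cmod (winner \<omega> a b) \<le> (\<Sum>n. norm (complex_of_real (\<omega> n) * a n * cnj (b n)))"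
    unfolding winner_def by (rule summable_norm[OF summable_norm_winner[OF a b]])
  also have "\<dots> = (\<Sum>n. Re (complex_of_real (\<omega> n) * A n * cnj (B n)))"
    by (simp add: A_def B_def norm_mult abs_of_nonneg weight_nonneg)
  also have "\<dots> = inner (to_ell2 A) (to_ell2 B)"
    unfolding inner_to_ell2[OF AB] winner_def by (rule Re_suminf[symmetric, OF summable_winner[OF AB]])
  also have "\<dots> \<le> norm (to_ell2 A) * norm (to_ell2 B)"
    by (rule norm_cauchy_schwarz)
  also have "\<dots> = wnorm \<omega> a * wnorm \<omega> b"
    by (simp add: norm_to_ell2 AB) (simp add: A_def B_def wnorm_def)
  finally show ?thesis .
qed


lemma mem_orth_compl_orth_compl:
  assumes "x \<in> S" "x \<in> H2w \<omega>"
  shows "x \<in> orth_compl \<omega> (orth_compl \<omega> S)"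
  using assms winner_commute[OF assms(2)] unfolding orth_compl_def by auto

lemma closed_subspace_orth_compl:
  assumes S: "S \<subseteq> H2w \<omega>"
  shows "closed_subspace \<omega> (orth_compl \<omega> S)"
  unfolding closed_subspace_def
proof (intro conjI allI ballI impI)
  show "orth_compl \<omega> S \<subseteq> H2w \<omega>" and "(\<lambda>n. 0) \<in> orth_compl \<omega> S"
    by (auto simp: orth_compl_def winner_def H2w_zero)
  show "(\<lambda>n. a n + b n) \<in> orth_compl \<omega> S" and "(\<lambda>n. c * a n) \<in> orth_compl \<omega> S"
    if "a \<in> orth_compl \<omega> S" "b \<in> orth_compl \<omega> S" for a b c
    using that S by (auto simp: orth_compl_def H2w_add H2w_scale winner_add_left winner_scale_left)
next
  fix g x
  assume "(\<forall>k. g k \<in> orth_compl \<omega> S) \<and> x \<in> H2w \<omega> \<and> (\<lambda>k. wnorm \<omega> (\<lambda>n. g k n - x n)) \<longlonglongrightarrow> 0"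
  then have g: "\<And>k. g k \<in> orth_compl \<omega> S" and x: "x \<in> H2w \<omega>"
    and lim: "(\<lambda>k. wnorm \<omega> (\<lambda>n. g k n - x n)) \<longlonglongrightarrow> 0"
    by auto
  have gH: "g k \<in> H2w \<omega>" for k
    using g unfolding orth_compl_def by blast
  have "winner \<omega> x s = 0" if s: "s \<in> S" for s
  proof -
    have sH: "s \<in> H2w \<omega>"
      using s S by blast
    have "cmod (winner \<omega> x s) \<le> wnorm \<omega> (\<lambda>n. g k n - x n) * wnorm \<omega> s" for k
    proof -
      have "winner \<omega> x s = winner \<omega> (\<lambda>n. x n - g k n) s"
        using g[of k] s by (simp add: winner_diff_left[OF x gH sH] orth_compl_def)
      then show ?thesis
        using norm_winner_le[OF H2w_diff[OF x gH] sH] by (simp add: wnorm_diff_commute)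
    qed
    moreover have "(\<lambda>k. wnorm \<omega> (\<lambda>n. g k n - x n) * wnorm \<omega> s) \<longlonglongrightarrow> 0"
      using tendsto_mult_left_zero[OF lim] .
    ultimately have "cmod (winner \<omega> x s) \<le> 0"
      by (intro LIMSEQ_le[OF tendsto_const]) auto
    then show ?thesis
      by simp
  qed
  with x show "x \<in> orth_compl \<omega> S"
    unfolding orth_compl_def by blast
qed

lemma orth_compl_subset_triple_orth_compl:
  "orth_compl \<omega> S \<subseteq> orth_compl \<omega> (orth_compl \<omega> (orth_compl \<omega> S))"
proof
  fix x
  assume x: "x \<in> orth_compl \<omega> S"
  have "winner \<omega> x g = 0" if "g \<in> orth_compl \<omega> (orth_compl \<omega> S)" for g
    using that x winner_commute[of g x] unfolding orth_compl_def by auto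
  with x show "x \<in> orth_compl \<omega> (orth_compl \<omega> (orth_compl \<omega> S))"
    unfolding orth_compl_def by blast
qed


lemma closed_subspace_cyclic_subspace: "closed_subspace \<omega> (cyclic_subspace \<omega> f)"
  unfolding cyclic_subspace_def by (rule closed_subspace_orth_compl) (auto simp: orth_compl_def)

lemma mem_cyclic_subspace: "f \<in> H2w \<omega> \<Longrightarrow> f \<in> cyclic_subspace \<omega> f"
  unfolding cyclic_subspace_def by (rule mem_orth_compl_orth_compl) (auto intro: range_eqI[of _ _ 0])

lemma orth_compl_cyclic_subspaceI:
  assumes "x \<in> H2w \<omega>" "\<And>m. winner \<omega> x ((zmul ^^ m) f) = 0"
  shows "x \<in> orth_compl \<omega> (cyclic_subspace \<omega> f)"
proof -
  have "x \<in> orth_compl \<omega> (range (\<lambda>m. (zmul ^^ m) f))"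
    using assms unfolding orth_compl_def by blast
  then show ?thesis
    unfolding cyclic_subspace_def using orth_compl_subset_triple_orth_compl by blast
qed

lemma monom_z_orth_cyclic_subspace:
  assumes "\<And>j. j < d \<Longrightarrow> f j = 0" "k < d"
  shows "monom_z k \<in> orth_compl \<omega> (cyclic_subspace \<omega> f)"
  using assms by (intro orth_compl_cyclic_subspaceI H2w_monom_z) (simp add: winner_monom_z_left zmul_pow_apply)

lemma winner_zmul_pow_proj_monom_z:
  assumes M: "closed_subspace \<omega> M" "z_invariant M"
    and below: "\<forall>k<d. monom_z k \<in> orth_compl \<omega> M" and "m \<ge> 1"
  defines "p \<equiv> proj \<omega> M (monom_z d)"
  shows "winner \<omega> ((zmul ^^ m) p) p = 0"
proof -
  note proj = proj_mem[OF M(1) H2w_monom_z, of d, folded p_def]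
  have pH: "p \<in> H2w \<omega>"
    using proj(1) closed_subspace_subset[OF M(1)] by blast
  have "p k = 0" if "k < d" for k
    using below that proj(1) weight_pos[of k] by (auto simp: orth_compl_def winner_monom_z_left)
  then have "winner \<omega> (monom_z d) ((zmul ^^ m) p) = 0"
    using \<open>m \<ge> 1\<close> by (simp add: winner_monom_z_left zmul_pow_apply)
  moreover have Mm: "(zmul ^^ m) p \<in> M"
    using z_invariant_zmul_pow[OF M(2) proj(1)] .
  then have "winner \<omega> (\<lambda>n. monom_z d n - p n) ((zmul ^^ m) p) = 0"
    using proj(2) unfolding orth_compl_def by blast
  ultimately have "winner \<omega> p ((zmul ^^ m) p) = 0"
    using Mm closed_subspace_subset[OF M(1)] by (simp add: winner_diff_left[OF H2w_monom_z pH] subset_iff)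
  then show ?thesis
    using Mm closed_subspace_subset[OF M(1)] winner_commute[OF pH] by (simp add: subset_iff)
qed

lemma H2w_inner_if_proj_monom_z:
  assumes "f \<in> H2w \<omega>" "wnorm \<omega> f = 1"
    and M: "closed_subspace \<omega> M" "z_invariant M" "\<forall>k<d. monom_z k \<in> orth_compl \<omega> M"
    and f: "f = (\<lambda>n. c * proj \<omega> M (monom_z d) n)"
  shows "H2w_inner \<omega> f"
proof -
  define p where "p = proj \<omega> M (monom_z d)"
  have pH: "p \<in> H2w \<omega>"
    using proj_mem(1)[OF M(1) H2w_monom_z] closed_subspace_subset[OF M(1)] unfolding p_def by blast
  have "winner \<omega> ((zmul ^^ m) f) f = 0" if "m \<ge> 1" for m
  proof -
    have "(zmul ^^ m) f = (\<lambda>n. c * (zmul ^^ m) p n)"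
      unfolding f p_def by (simp add: fun_eq_iff zmul_pow_apply)
    moreover have "(zmul ^^ m) p \<in> H2w \<omega>"
      using z_invariant_zmul_pow[OF M(2) proj_mem(1)[OF M(1) H2w_monom_z]] closed_subspace_subset[OF M(1)]
      unfolding p_def by blast
    ultimately show ?thesis
      using winner_zmul_pow_proj_monom_z[OF M that] unfolding f p_def[symmetric]
      by (simp add: winner_scale_left winner_scale_right H2w_scale pH)
  qed
  with assms(1,2) show ?thesis
    unfolding H2w_inner_def by blast
qed

end

section \<open>Weights for which multiplication by \<open>z\<close> is bounded\<close>

locale shift_bounded_weight = weight +
  fixes C :: real
  assumes weight_Suc_le: "\<And>n. \<omega> (Suc n) \<le> C * \<omega> n"
begin

lemma zmul_H2w:
  assumes "a \<in> H2w \<omega>"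
  shows "zmul a \<in> H2w \<omega>"
proof -
  have "summable (\<lambda>n. C * (\<omega> n * (cmod (a n))\<^sup>2))"
    using assms by (intro summable_mult) (simp add: mem_H2w_iff)
  then have "summable (\<lambda>n. \<omega> (Suc n) * (cmod (a n))\<^sup>2)"
    by (rule summable_comparison_test'[where N = 0])
      (use mult_right_mono[OF weight_Suc_le] weight_nonneg in \<open>simp add: mult.assoc\<close>)
  then show ?thesis
    unfolding mem_H2w_iff by (subst summable_Suc_iff[symmetric]) (simp add: zmul_def)
qed

lemma zmul_pow_H2w: "a \<in> H2w \<omega> \<Longrightarrow> (zmul ^^ m) a \<in> H2w \<omega>"
  by (induction m) (simp_all add: zmul_H2w)

text \<open>The adjoint of multiplication by \<open>z\<close> with respect to the weighted inner product.\<close>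
definition bshift :: "(nat \<Rightarrow> complex) \<Rightarrow> (nat \<Rightarrow> complex)" where
  "bshift h = (\<lambda>n. complex_of_real (\<omega> (Suc n) / \<omega> n) * h (Suc n))"

lemma bshift_H2w:
  assumes "h \<in> H2w \<omega>"
  shows "bshift h \<in> H2w \<omega>"
proof -
  have s: "summable (\<lambda>n. C * (\<omega> (Suc n) * (cmod (h (Suc n)))\<^sup>2))"
    using assms unfolding mem_H2w_iff by (intro summable_mult) (subst summable_Suc_iff)
  have bound: "\<omega> n * (cmod (bshift h n))\<^sup>2 \<le> C * (\<omega> (Suc n) * (cmod (h (Suc n)))\<^sup>2)" for n
  proof -
    have c: "cmod (bshift h n) = \<omega> (Suc n) / \<omega> n * cmod (h (Suc n))"
      using weight_pos[of n] weight_pos[of "Suc n"] by (simp add: bshift_def norm_mult norm_divide)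
    have "\<omega> n * (cmod (bshift h n))\<^sup>2 = \<omega> (Suc n) / \<omega> n * (\<omega> (Suc n) * (cmod (h (Suc n)))\<^sup>2)"
      unfolding c using weight_pos[of n] by (simp add: power2_eq_square field_simps)
    also have "\<dots> \<le> C * (\<omega> (Suc n) * (cmod (h (Suc n)))\<^sup>2)"
      using weight_Suc_le[of n] weight_pos[of n] weight_nonneg[of "Suc n"]
      by (intro mult_right_mono) (simp_all add: divide_le_eq)
    finally show ?thesis .
  qed
  show ?thesis
    unfolding mem_H2w_iff
    by (rule summable_comparison_test'[OF s, where N = 0]) (simp add: bound weight_nonneg)
qed

lemma winner_zmul_left:
  assumes a: "a \<in> H2w \<omega>" and h: "h \<in> H2w \<omega>"
  shows "winner \<omega> (zmul a) h = winner \<omega> a (bshift h)"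
proof -
  have "complex_of_real (\<omega> n) * cnj (bshift h n) = complex_of_real (\<omega> (Suc n)) * cnj (h (Suc n))" for n
  proof -
    have "\<omega> n * (\<omega> (Suc n) / \<omega> n) = \<omega> (Suc n)"
      using weight_pos[of n] by simp
    then show ?thesis
      by (simp only: bshift_def complex_cnj_mult complex_cnj_complex_of_real
          mult.assoc[symmetric] of_real_mult[symmetric])
  qed
  then have "winner \<omega> a (bshift h) = (\<Sum>n. complex_of_real (\<omega> (Suc n)) * zmul a (Suc n) * cnj (h (Suc n)))"
    unfolding winner_def zmul_def by (simp add: mult.commute mult.left_commute)
  also have "\<dots> = winner \<omega> (zmul a) h"
    using suminf_split_head[OF summable_winner[OF zmul_H2w[OF a] h]]
    unfolding winner_def by (simp add: zmul_def)
  finally show ?thesis ..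
qed

lemma bshift_orth_compl:
  assumes "S \<subseteq> H2w \<omega>" "\<And>s. s \<in> S \<Longrightarrow> zmul s \<in> S" "h \<in> orth_compl \<omega> S"
  shows "bshift h \<in> orth_compl \<omega> S"
proof -
  have h: "h \<in> H2w \<omega>"
    using assms(3) unfolding orth_compl_def by blast
  have "winner \<omega> (bshift h) s = 0" if s: "s \<in> S" for s
  proof -
    have sH: "s \<in> H2w \<omega>"
      using s assms(1) by blast
    have "winner \<omega> h (zmul s) = 0"
      using assms(2,3) s unfolding orth_compl_def by blast
    then have "winner \<omega> s (bshift h) = 0"
      using winner_commute[OF h zmul_H2w[OF sH]] by (simp add: winner_zmul_left[OF sH h])
    then show ?thesis
      using winner_commute[OF sH bshift_H2w[OF h]] by simp
  qed
  with h show ?thesis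
    unfolding orth_compl_def by (auto simp: bshift_H2w)
qed

lemma z_invariant_orth_compl:
  assumes "T \<subseteq> H2w \<omega>" "\<And>h. h \<in> T \<Longrightarrow> bshift h \<in> T"
  shows "z_invariant (orth_compl \<omega> T)"
  using assms winner_zmul_left unfolding z_invariant_def orth_compl_def by (auto simp: zmul_H2w subset_iff)

lemma z_invariant_cyclic_subspace:
  assumes "f \<in> H2w \<omega>"
  shows "z_invariant (cyclic_subspace \<omega> f)"
proof -
  let ?S = "range (\<lambda>m. (zmul ^^ m) f)"
  have "?S \<subseteq> H2w \<omega>" and "\<And>s. s \<in> ?S \<Longrightarrow> zmul s \<in> ?S"
    using zmul_pow_H2w[OF assms] by (auto intro: range_eqI[of _ _ "Suc _"])
  then show ?thesis
    unfolding cyclic_subspace_def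
    by (intro z_invariant_orth_compl bshift_orth_compl) (auto simp: orth_compl_def)
qed

lemma proj_monom_z_cyclic_subspace:
  assumes "H2w_inner \<omega> f" and below: "\<And>k. k < d \<Longrightarrow> f k = 0"
  shows "proj \<omega> (cyclic_subspace \<omega> f) (monom_z d) = (\<lambda>n. winner \<omega> (monom_z d) f * f n)"
proof -
  define a where "a = winner \<omega> (monom_z d) f"
  have f: "f \<in> H2w \<omega>" "winner \<omega> f f = 1"
    and orth: "\<And>m. m \<ge> 1 \<Longrightarrow> winner \<omega> ((zmul ^^ m) f) f = 0"
    using assms(1) winner_self[of f] unfolding H2w_inner_def by auto
  have "winner \<omega> (\<lambda>n. monom_z d n - a * f n) ((zmul ^^ m) f) = 0" for m
  proof (cases "m = 0")
    case False
    then have "winner \<omega> f ((zmul ^^ m) f) = 0"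
      using orth[of m] winner_commute[OF zmul_pow_H2w[OF f(1)] f(1)] by simp
    moreover have "winner \<omega> (monom_z d) ((zmul ^^ m) f) = 0"
      using False below[of "d - m"] by (simp add: winner_monom_z_left zmul_pow_apply)
    ultimately show ?thesis
      using f(1) by (simp add: winner_diff_left winner_scale_left H2w_scale H2w_monom_z zmul_pow_H2w)
  qed (use f in \<open>simp add: a_def winner_diff_left winner_scale_left H2w_scale H2w_monom_z\<close>)
  then have "(\<lambda>n. monom_z d n - a * f n) \<in> orth_compl \<omega> (cyclic_subspace \<omega> f)"
    using f(1) by (intro orth_compl_cyclic_subspaceI H2w_diff H2w_monom_z H2w_scale)
  moreover have "(\<lambda>n. a * f n) \<in> cyclic_subspace \<omega> f"
    using closed_subspace_scale[OF closed_subspace_cyclic_subspace mem_cyclic_subspace[OF f(1)]] .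
  ultimately show ?thesis
    unfolding a_def[symmetric] using f(1) by (intro proj_eqI closed_subspace_cyclic_subspace H2w_monom_z)
qed

lemma cyclic_subspace_if_H2w_inner:
  assumes inner: "H2w_inner \<omega> f"
  shows "\<exists>M d. closed_subspace \<omega> M \<and> z_invariant M \<and> M \<noteq> {(\<lambda>n. 0)} \<and>
       (\<forall>k<d. monom_z k \<in> orth_compl \<omega> M) \<and> monom_z d \<notin> orth_compl \<omega> M \<and>
       (\<exists>c::complex. f = (\<lambda>n. c * proj \<omega> M (monom_z d) n))"
proof -
  have f: "f \<in> H2w \<omega>" "winner \<omega> f f = 1"
    using inner winner_self[of f] unfolding H2w_inner_def by auto
  then have "f \<noteq> (\<lambda>n. 0)"
    by (auto simp: winner_def)
  then obtain n where "f n \<noteq> 0"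
    by auto
  define d where "d = (LEAST n. f n \<noteq> 0)"
  have fd: "f d \<noteq> 0" and below: "\<And>k. k < d \<Longrightarrow> f k = 0"
    using LeastI[of "\<lambda>n. f n \<noteq> 0", OF \<open>f n \<noteq> 0\<close>] not_less_Least unfolding d_def by auto
  define M where "M = cyclic_subspace \<omega> f"
  define a where "a = winner \<omega> (monom_z d) f"
  have "a \<noteq> 0"
    using fd weight_pos[of d] by (simp add: a_def winner_monom_z_left)
  show ?thesis
  proof (intro exI[of _ M] exI[of _ d] conjI)
    show "closed_subspace \<omega> M" "z_invariant M"
      unfolding M_def using closed_subspace_cyclic_subspace z_invariant_cyclic_subspace[OF f(1)] .
    show "M \<noteq> {(\<lambda>n. 0)}"
      using mem_cyclic_subspace[OF f(1)] \<open>f \<noteq> (\<lambda>n. 0)\<close> unfolding M_def by blast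
    show "\<forall>k<d. monom_z k \<in> orth_compl \<omega> M"
      unfolding M_def using monom_z_orth_cyclic_subspace[of d f, OF below] by blast
    show "monom_z d \<notin> orth_compl \<omega> M"
      using mem_cyclic_subspace[OF f(1)] \<open>a \<noteq> 0\<close> unfolding a_def M_def orth_compl_def by auto
    have "proj \<omega> M (monom_z d) = (\<lambda>n. a * f n)"
      unfolding M_def a_def by (rule proj_monom_z_cyclic_subspace[of f d, OF inner below])
    with \<open>a \<noteq> 0\<close> show "\<exists>c. f = (\<lambda>n. c * proj \<omega> M (monom_z d) n)"
      by (intro exI[of _ "inverse a"]) (simp add: mult.assoc[symmetric])
  qed
qed

end

lemma admissible_weight_shift_bounded:
  assumes "admissible_weight \<omega>"
  obtains C where "shift_bounded_weight \<omega> C"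
proof -
  have pos: "\<And>n. \<omega> n > 0" and "(\<lambda>n. \<omega> (Suc n) / \<omega> n) \<longlonglongrightarrow> 1"
    using assms unfolding admissible_weight_def by auto
  then obtain C where C: "\<And>n. norm (\<omega> (Suc n) / \<omega> n) \<le> C"
    using convergent_imp_Bseq[of "\<lambda>n. \<omega> (Suc n) / \<omega> n"] unfolding convergent_def Bseq_def by blast
  have "\<omega> (Suc n) \<le> C * \<omega> n" for n
  proof -
    have "\<omega> (Suc n) / \<omega> n \<le> C"
      using abs_le_D1[OF C[of n, unfolded real_norm_def]] .
    then show ?thesis
      using pos[of n] by (simp add: pos_divide_le_eq mult.commute)
  qed
  with pos show ?thesis
    by (intro that) (unfold_locales)
qed

theorem mainTheorem1:
  fixes \<omega> :: "nat \<Rightarrow> real" and f :: "nat \<Rightarrow> complex"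
  assumes "admissible_weight \<omega>"
    and "f \<in> H2w \<omega>" and "wnorm \<omega> f = 1"
  shows "H2w_inner \<omega> f \<longleftrightarrow>
    (\<exists>M d. closed_subspace \<omega> M \<and> z_invariant M \<and> M \<noteq> {(\<lambda>n. 0)} \<and>
       (\<forall>k<d. monom_z k \<in> orth_compl \<omega> M) \<and> monom_z d \<notin> orth_compl \<omega> M \<and>
       (\<exists>c::complex. f = (\<lambda>n. c * proj \<omega> M (monom_z d) n)))"
proof -
  obtain C where "shift_bounded_weight \<omega> C"
    using admissible_weight_shift_bounded[OF assms(1)] .
  then interpret shift_bounded_weight \<omega> C .
  show ?thesis
    using cyclic_subspace_if_H2w_inner H2w_inner_if_proj_monom_z[OF assms(2,3)] by metis
qed

end
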